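(* Let $\mathrm{R}_8=\{a_0,a_1,\dots,a_7\}$ be the dihedral quandle of order $8$, i.e. the set $\mathbb{Z}_8$ with the binary operation $a_i\cdot a_j=a_{(2j-i)\bmod 8}$. Let $\mathbb{Z}[\mathrm{R}_8]$ be its integral quandle ring and $\Delta(\mathrm{R}_8)$ its augmentation ideal. Then \[ \left|\Delta^2(\mathrm{R}_8)/\Delta^3(\mathrm{R}_8)\right| = 16 . \]
   Context: For a quandle $A$, the quandle ring $\mathbb{Z}[A]$ is the free abelian group on $A$, with multiplication defined by bilinear extension of the quandle operation: $\left(\sum_i r_i a_i\right)\cdot\left(\sum_j s_j a_j\right)=\sum_{i,j} r_i s_j (a_i\cdot a_j)$ (this ring is in general non-associative). The augmentation ideal $\Delta(A)$ is the kernel of the augmentation map $\varepsilon:\mathbb{Z}[A]\to\mathbb{Z}$, $\sum_i r_i a_i\mapsto \sum_i r_i$. Its powers are defined by $\Delta^1(A)=\Delta(A)$ and $\Delta^{k+1}(A)=\Delta^k(A)\cdot\Delta(A)$, the additive subgroup of $\mathbb{Z}[A]$ generated by all products $x\cdot y$ with $x\in\Delta^k(A)$, $y\in\Delta(A)$. *)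

theory Defs
  imports Main
begin

text \<open>Integral quandle ring of a finite quandle with carrier A and operation op:
  elements are integer-valued functions supported on A (formal Z-linear combinations).\<close>

definition qring :: "'a set \<Rightarrow> ('a \<Rightarrow> int) set" where
  "qring A = {f. \<forall>x. x \<notin> A \<longrightarrow> f x = 0}"

definition qmult :: "'a set \<Rightarrow> ('a \<Rightarrow> 'a \<Rightarrow> 'a) \<Rightarrow> ('a \<Rightarrow> int) \<Rightarrow> ('a \<Rightarrow> int) \<Rightarrow> ('a \<Rightarrow> int)" where
  "qmult A op f g = (\<lambda>c. \<Sum>a\<in>A. \<Sum>b\<in>A. if op a b = c then f a * g b else 0)"

definition aug :: "'a set \<Rightarrow> ('a \<Rightarrow> int) \<Rightarrow> int" where
  "aug A f = (\<Sum>a\<in>A. f a)"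

definition aug_ideal :: "'a set \<Rightarrow> ('a \<Rightarrow> int) set" where
  "aug_ideal A = {f \<in> qring A. aug A f = 0}"

inductive_set add_span :: "('a \<Rightarrow> int) set \<Rightarrow> ('a \<Rightarrow> int) set" for S where
  zero: "(\<lambda>_. 0) \<in> add_span S"
| gen: "x \<in> S \<Longrightarrow> x \<in> add_span S"
| add: "x \<in> add_span S \<Longrightarrow> y \<in> add_span S \<Longrightarrow> (\<lambda>a. x a + y a) \<in> add_span S"
| neg: "x \<in> add_span S \<Longrightarrow> (\<lambda>a. - x a) \<in> add_span S"

text \<open>Powers of the augmentation ideal: aug_pow A op k = Delta^k for k >= 1
  (the value at k = 0 is an unused convention).\<close>
fun aug_pow :: "'a set \<Rightarrow> ('a \<Rightarrow> 'a \<Rightarrow> 'a) \<Rightarrow> nat \<Rightarrow> ('a \<Rightarrow> int) set" where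
  "aug_pow A op 0 = qring A"
| "aug_pow A op (Suc 0) = aug_ideal A"
| "aug_pow A op (Suc (Suc k)) =
     add_span {qmult A op x y | x y. x \<in> aug_pow A op (Suc k) \<and> y \<in> aug_ideal A}"

definition quot_cosets :: "('a \<Rightarrow> int) set \<Rightarrow> ('a \<Rightarrow> int) set \<Rightarrow> ('a \<Rightarrow> int) set set" where
  "quot_cosets M N = (\<lambda>x. (\<lambda>d. (\<lambda>a. x a + d a)) ` N) ` M"

definition dihedral_carrier :: "int \<Rightarrow> int set" where
  "dihedral_carrier n = {0..<n}"

definition dihedral_op :: "int \<Rightarrow> int \<Rightarrow> int \<Rightarrow> int" where
  "dihedral_op n i j = (2 * j - i) mod n"

end

theory Submission
  imports Defs
begin

text \<open>Write \<open>e\<^sub>a\<close> for the basis element \<open>a\<close> of \<open>\<int>[R\<^sub>8]\<close>. Since the augmentation ideal is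
  spanned by the differences \<open>e\<^sub>a - e\<^sub>0\<close>, an integral linear functional \<open>w\<close> takes values
  in \<open>m\<int>\<close> on \<open>\<Delta>\<^sup>2\<close> (resp. \<open>\<Delta>\<^sup>3\<close>) as soon as \<open>m\<close> divides the mixed second (resp. third)
  differences of \<open>w\<close> composed with the quandle operation, a finite check. This puts \<open>\<Delta>\<^sup>2\<close>
  into a lattice given by one congruence mod 4 and \<open>\<Delta>\<^sup>3\<close> into a lattice \<open>L\<close> given by
  congruences mod 2, 4 and 8; conversely \<open>L\<close> has a basis of explicit integral combinations of
  triple products, so \<open>\<Delta>\<^sup>3 = L\<close>. Hence \<open>\<Delta>\<^sup>2/\<Delta>\<^sup>3\<close> embeds into
  \<open>\<int>/2 \<times> \<int>/4 \<times> \<int>/8\<close> via the three residues, and sixteen explicit elements of \<open>\<Delta>\<^sup>2\<close>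
  exhaust the residue triples allowed by the mod 4 congruence.\<close>

lemma qmult_add_left: "qmult A op (\<lambda>c. f c + g c) h = (\<lambda>c. qmult A op f h c + qmult A op g h c)"
  unfolding qmult_def by (auto simp: fun_eq_iff distrib_right simp flip: sum.distrib intro!: sum.cong)

lemma qmult_add_right: "qmult A op h (\<lambda>c. f c + g c) = (\<lambda>c. qmult A op h f c + qmult A op h g c)"
  unfolding qmult_def by (auto simp: fun_eq_iff distrib_left simp flip: sum.distrib intro!: sum.cong)

lemma qmult_neg_left: "qmult A op (\<lambda>c. - f c) h = (\<lambda>c. - qmult A op f h c)"
  unfolding qmult_def by (auto simp: fun_eq_iff simp flip: sum_negf intro!: sum.cong)

lemma qmult_zero_left: "qmult A op (\<lambda>c. 0) h = (\<lambda>c. 0)"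
  unfolding qmult_def by (simp add: fun_eq_iff cong: if_cong)

lemma qmult_zero_right: "qmult A op h (\<lambda>c. 0) = (\<lambda>c. 0)"
  unfolding qmult_def by (simp add: fun_eq_iff cong: if_cong)

definition pairing :: "'a set \<Rightarrow> ('a \<Rightarrow> int) \<Rightarrow> ('a \<Rightarrow> int) \<Rightarrow> int" where
  "pairing A w f = (\<Sum>a\<in>A. w a * f a)"

lemma pairing_add: "pairing A w (\<lambda>a. f a + g a) = pairing A w f + pairing A w g"
  unfolding pairing_def by (simp add: distrib_left sum.distrib)

lemma pairing_diff: "pairing A w (\<lambda>a. f a - g a) = pairing A w f - pairing A w g"
  unfolding pairing_def by (simp add: right_diff_distrib sum_subtractf)

lemma pairing_neg: "pairing A w (\<lambda>a. - f a) = - pairing A w f"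
  unfolding pairing_def by (simp add: sum_negf)

lemma pairing_zero: "pairing A w (\<lambda>a. 0) = 0"
  unfolding pairing_def by simp

lemma sum_mult_shift_of_sum_zero:
  fixes x h :: "'a \<Rightarrow> int"
  assumes "finite A" "sum x A = 0"
  shows "(\<Sum>a\<in>A. x a * h a) = (\<Sum>a\<in>A. x a * (h a - h z))"
proof -
  have "(\<Sum>a\<in>A. x a * (h a - h z)) = (\<Sum>a\<in>A. x a * h a) - sum x A * h z"
    by (simp add: right_diff_distrib sum_subtractf sum_distrib_right)
  with assms show ?thesis by simp
qed

text \<open>As \<open>u\<close> and \<open>v\<close> have coefficient sum zero, \<open>T\<close> may be replaced by its mixed
  difference at an arbitrary base point \<open>z\<close>.\<close>

lemma dvd_double_sum_of_sum_zero:
  fixes u v :: "'a \<Rightarrow> int" and T :: "'a \<Rightarrow> 'a \<Rightarrow> int"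
  assumes "finite A" "sum u A = 0" "sum v A = 0"
    and "\<And>a b. a \<in> A \<Longrightarrow> b \<in> A \<Longrightarrow> m dvd T a b - T a z - T z b + T z z"
  shows "m dvd (\<Sum>a\<in>A. \<Sum>b\<in>A. u a * v b * T a b)"
proof -
  have "(\<Sum>a\<in>A. \<Sum>b\<in>A. u a * v b * T a b) = (\<Sum>a\<in>A. u a * (\<Sum>b\<in>A. v b * T a b))"
    by (simp add: sum_distrib_left mult.assoc)
  also have "\<dots> = (\<Sum>a\<in>A. u a * (\<Sum>b\<in>A. v b * (T a b - T a z)))"
    using sum_mult_shift_of_sum_zero[OF assms(1,3)] by metis
  also have "\<dots> = (\<Sum>a\<in>A. u a * ((\<Sum>b\<in>A. v b * (T a b - T a z)) - (\<Sum>b\<in>A. v b * (T z b - T z z))))"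
    by (rule sum_mult_shift_of_sum_zero[OF assms(1,2)])
  also have "\<dots> = (\<Sum>a\<in>A. \<Sum>b\<in>A. u a * v b * (T a b - T a z - T z b + T z z))"
    by (simp add: sum_distrib_left algebra_simps flip: sum_subtractf)
  finally show ?thesis
    using assms(4) by (simp add: dvd_sum)
qed

lemma dvd_triple_sum_of_sum_zero:
  fixes u v y :: "'a \<Rightarrow> int" and T :: "'a \<Rightarrow> 'a \<Rightarrow> 'a \<Rightarrow> int"
  assumes "finite A" "sum u A = 0" "sum v A = 0" "sum y A = 0"
    and "\<And>a b c. a \<in> A \<Longrightarrow> b \<in> A \<Longrightarrow> c \<in> A \<Longrightarrow>
      m dvd T a b c - T a b z - T a z c + T a z z - T z b c + T z b z + T z z c - T z z z"
  shows "m dvd (\<Sum>a\<in>A. \<Sum>b\<in>A. \<Sum>c\<in>A. u a * v b * y c * T a b c)"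
proof -
  define S where "S a b = (\<Sum>c\<in>A. y c * T a b c)" for a b
  have "m dvd S a b - S a z - S z b + S z z" if "a \<in> A" "b \<in> A" for a b
  proof -
    have "S a b - S a z - S z b + S z z = (\<Sum>c\<in>A. y c * (T a b c - T a z c - T z b c + T z z c))"
      unfolding S_def by (simp add: algebra_simps sum_subtractf sum.distrib)
    also have "\<dots> = (\<Sum>c\<in>A. y c *
        (T a b c - T a b z - T a z c + T a z z - T z b c + T z b z + T z z c - T z z z))"
      using sum_mult_shift_of_sum_zero[OF assms(1,4),
          where h = "\<lambda>c. T a b c - T a z c - T z b c + T z z c" and z = z]
      by (simp add: algebra_simps)
    finally show ?thesis
      by (simp only:) (intro dvd_sum dvd_mult assms(5) that)
  qed
  then have "m dvd (\<Sum>a\<in>A. \<Sum>b\<in>A. u a * v b * S a b)"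
    by (rule dvd_double_sum_of_sum_zero[OF assms(1-3)])
  then show ?thesis
    unfolding S_def by (simp add: sum_distrib_left mult_ac)
qed

section \<open>Subgroups cut out by congruences\<close>

definition add_subgroup :: "('a \<Rightarrow> int) set \<Rightarrow> bool" where
  "add_subgroup G \<longleftrightarrow> (\<lambda>_. 0) \<in> G \<and> (\<forall>x\<in>G. \<forall>y\<in>G. (\<lambda>a. x a + y a) \<in> G) \<and> (\<forall>x\<in>G. (\<lambda>a. - x a) \<in> G)"

lemma add_subgroupI:
  assumes "(\<lambda>_. 0) \<in> G" "\<And>x y. x \<in> G \<Longrightarrow> y \<in> G \<Longrightarrow> (\<lambda>a. x a + y a) \<in> G"
    "\<And>x. x \<in> G \<Longrightarrow> (\<lambda>a. - x a) \<in> G"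
  shows "add_subgroup G"
  using assms unfolding add_subgroup_def by blast

lemma add_subgroup_zero: "add_subgroup G \<Longrightarrow> (\<lambda>_. 0) \<in> G"
  unfolding add_subgroup_def by blast

lemma add_subgroup_add: "add_subgroup G \<Longrightarrow> x \<in> G \<Longrightarrow> y \<in> G \<Longrightarrow> (\<lambda>a. x a + y a) \<in> G"
  unfolding add_subgroup_def by blast

lemma add_subgroup_neg: "add_subgroup G \<Longrightarrow> x \<in> G \<Longrightarrow> (\<lambda>a. - x a) \<in> G"
  unfolding add_subgroup_def by blast

lemma add_subgroup_qmult_right_preimage:
  assumes "add_subgroup G"
  shows "add_subgroup {x. qmult A op x y \<in> G}"
  using assms
  by (intro add_subgroupI)
    (simp_all add: qmult_zero_left qmult_add_left qmult_neg_left
      add_subgroup_zero add_subgroup_add add_subgroup_neg)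

lemma add_subgroup_qring: "add_subgroup (qring A)"
  unfolding qring_def by (rule add_subgroupI) auto

lemma qring_eqI:
  assumes "f \<in> qring A" "g \<in> qring A" "\<And>x. x \<in> A \<Longrightarrow> f x = g x"
  shows "f = g"
proof
  fix x
  show "f x = g x"
    using assms unfolding qring_def by (cases "x \<in> A") auto
qed

lemma add_span_minimal:
  assumes "add_subgroup G" "S \<subseteq> G"
  shows "add_span S \<subseteq> G"
proof
  fix x assume "x \<in> add_span S"
  then show "x \<in> G"
    by induction (use assms add_subgroup_zero add_subgroup_add add_subgroup_neg in auto)
qed

lemma add_span_smult:
  assumes "x \<in> add_span S"
  shows "(\<lambda>a. k * x a) \<in> add_span S"
proof -
  have nat_multiple: "(\<lambda>a. int n * x a) \<in> add_span S" for n
  proof (induction n)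
    case 0
    show ?case using add_span.zero by simp
  next
    case (Suc n)
    from add_span.add[OF Suc assms] show ?case by (simp add: algebra_simps)
  qed
  show ?thesis
  proof (cases "k \<ge> 0")
    case True
    then show ?thesis using nat_multiple[of "nat k"] by simp
  next
    case False
    then show ?thesis using add_span.neg[OF nat_multiple[of "nat (- k)"]] by simp
  qed
qed

lemma add_span_sum_list:
  assumes "\<And>c g. (c, g) \<in> set cs \<Longrightarrow> g \<in> add_span S"
  shows "(\<lambda>a. \<Sum>(c, g)\<leftarrow>cs. c * g a) \<in> add_span S"
  using assms
proof (induction cs)
  case Nil
  show ?case using add_span.zero by simp
next
  case (Cons cg cs)
  obtain c g where cg: "cg = (c, g)" by fastforce
  have "(\<lambda>a. c * g a) \<in> add_span S"
    by (intro add_span_smult) (use Cons.prems cg in auto)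
  moreover have "(\<lambda>a. \<Sum>(c, g)\<leftarrow>cs. c * g a) \<in> add_span S"
    by (intro Cons.IH) (use Cons.prems in auto)
  ultimately show ?case
    using add_span.add cg by fastforce
qed

text \<open>A modulus \<open>0\<close> imposes the exact equation \<open>pairing A w f = 0\<close>; correspondingly
  \<open>residues\<close> below records the value itself, as \<open>x mod 0 = x\<close>.\<close>

definition congruence_subgroup :: "'a set \<Rightarrow> (int \<times> ('a \<Rightarrow> int)) list \<Rightarrow> ('a \<Rightarrow> int) set" where
  "congruence_subgroup A cs = {f \<in> qring A. \<forall>(m, w)\<in>set cs. m dvd pairing A w f}"

lemma add_subgroup_congruence_subgroup: "add_subgroup (congruence_subgroup A cs)"
  unfolding congruence_subgroup_def qring_def case_prod_beta
  by (rule add_subgroupI) (auto simp: pairing_zero pairing_add pairing_neg)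

definition residues :: "'a set \<Rightarrow> (int \<times> ('a \<Rightarrow> int)) list \<Rightarrow> ('a \<Rightarrow> int) \<Rightarrow> int list" where
  "residues A cs f = map (\<lambda>(m, w). pairing A w f mod m) cs"

lemma diff_in_congruence_subgroup_iff:
  assumes "x \<in> qring A" "y \<in> qring A"
  shows "(\<lambda>a. x a - y a) \<in> congruence_subgroup A cs \<longleftrightarrow> residues A cs x = residues A cs y"
  using assms
  by (auto simp: congruence_subgroup_def qring_def residues_def pairing_diff mod_eq_dvd_iff
      split: prod.splits)

lemma card_image_eq_if_same_fibres:
  assumes "\<And>x y. x \<in> X \<Longrightarrow> y \<in> X \<Longrightarrow> f x = f y \<longleftrightarrow> g x = g y"
  shows "card (f ` X) = card (g ` X)"
proof -
  define h where "h q = f (inv_into X g q)" for q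
  have h_g: "h (g x) = f x" if "x \<in> X" for x
    unfolding h_def using that assms inv_into_into[of "g x" g X] f_inv_into_f[of "g x" g X] by auto
  have "inj_on h (g ` X)"
    by (rule inj_onI) (auto simp: h_g assms)
  moreover have "h ` g ` X = f ` X"
    by (simp add: image_image h_g cong: image_cong)
  ultimately show ?thesis
    by (metis card_image)
qed

lemma coset_subset_coset:
  assumes "add_subgroup N" "(\<lambda>a. x a - y a) \<in> N"
  shows "(\<lambda>d a. x a + d a) ` N \<subseteq> (\<lambda>d a. y a + d a) ` N"
proof
  fix z assume "z \<in> (\<lambda>d a. x a + d a) ` N"
  then obtain e where e: "e \<in> N" and z: "z = (\<lambda>a. x a + e a)" by blast
  have "(\<lambda>a. (x a - y a) + e a) \<in> N"
    using add_subgroup_add[OF assms e] .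
  moreover have "z = (\<lambda>a. y a + ((x a - y a) + e a))"
    unfolding z by simp
  ultimately show "z \<in> (\<lambda>d a. y a + d a) ` N"
    using image_eqI[of z "\<lambda>d a. y a + d a" "\<lambda>a. (x a - y a) + e a" N] by simp
qed

lemma coset_eq_coset_iff:
  assumes "add_subgroup N"
  shows "(\<lambda>d a. x a + d a) ` N = (\<lambda>d a. y a + d a) ` N \<longleftrightarrow> (\<lambda>a. x a - y a) \<in> N"
proof
  assume eq: "(\<lambda>d a. x a + d a) ` N = (\<lambda>d a. y a + d a) ` N"
  have "x \<in> (\<lambda>d a. x a + d a) ` N"
    using add_subgroup_zero[OF assms] by force
  then obtain d where "d \<in> N" "x = (\<lambda>a. y a + d a)"
    unfolding eq by blast
  then show "(\<lambda>a. x a - y a) \<in> N" by simp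
next
  assume diff: "(\<lambda>a. x a - y a) \<in> N"
  have "(\<lambda>a. y a - x a) \<in> N"
    using add_subgroup_neg[OF assms diff] by simp
  with diff show "(\<lambda>d a. x a + d a) ` N = (\<lambda>d a. y a + d a) ` N"
    by (intro equalityI coset_subset_coset assms)
qed

lemma card_quot_cosets_congruence_subgroup:
  assumes "M \<subseteq> qring A"
  shows "card (quot_cosets M (congruence_subgroup A cs)) = card (residues A cs ` M)"
  unfolding quot_cosets_def
  by (rule card_image_eq_if_same_fibres)
    (simp add: coset_eq_coset_iff add_subgroup_congruence_subgroup
      diff_in_congruence_subgroup_iff assms[THEN subsetD])

definition fsum :: "(int \<times> 'a) list \<Rightarrow> 'a \<Rightarrow> int" where
  "fsum L c = (\<Sum>(k, p)\<leftarrow>L. if p = c then k else 0)"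

definition fsum_mult :: "('a \<Rightarrow> 'a \<Rightarrow> 'a) \<Rightarrow> (int \<times> 'a) list \<Rightarrow> (int \<times> 'a) list \<Rightarrow> (int \<times> 'a) list" where
  "fsum_mult op L M = [(k * l, op p q). (k, p) \<leftarrow> L, (l, q) \<leftarrow> M]"

lemma fsum_Nil: "fsum [] = (\<lambda>c. 0)"
  by (simp add: fsum_def fun_eq_iff)

lemma fsum_Cons: "fsum ((k, p) # L) = (\<lambda>c. (if p = c then k else 0) + fsum L c)"
  by (simp add: fsum_def fun_eq_iff)

lemma fsum_append: "fsum (L @ M) = (\<lambda>c. fsum L c + fsum M c)"
  by (simp add: fsum_def fun_eq_iff)

lemma fsum_mult_Nil: "fsum_mult op [] M = []"
  by (simp add: fsum_mult_def)

lemma fsum_mult_Cons: "fsum_mult op ((k, p) # L) M = map (\<lambda>(l, q). (k * l, op p q)) M @ fsum_mult op L M"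
  by (induction M) (auto simp: fsum_mult_def)

definition basis_diff :: "'a \<Rightarrow> 'a \<Rightarrow> (int \<times> 'a) list" where
  "basis_diff z a = [(1, a), (-1, z)]"

definition diff_product2 :: "('a \<Rightarrow> 'a \<Rightarrow> 'a) \<Rightarrow> 'a \<Rightarrow> 'a \<Rightarrow> 'a \<Rightarrow> (int \<times> 'a) list" where
  "diff_product2 op z a b = fsum_mult op (basis_diff z a) (basis_diff z b)"

definition diff_product3 :: "('a \<Rightarrow> 'a \<Rightarrow> 'a) \<Rightarrow> 'a \<Rightarrow> 'a \<Rightarrow> 'a \<Rightarrow> 'a \<Rightarrow> (int \<times> 'a) list" where
  "diff_product3 op z a b c = fsum_mult op (diff_product2 op z a b) (basis_diff z c)"

definition diff_combination2 :: "('a \<Rightarrow> 'a \<Rightarrow> 'a) \<Rightarrow> 'a \<Rightarrow> (int \<times> 'a \<times> 'a) list \<Rightarrow> 'a \<Rightarrow> int" where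
  "diff_combination2 op z es = (\<lambda>x. \<Sum>(c, a, b)\<leftarrow>es. c * fsum (diff_product2 op z a b) x)"

definition diff_combination3 ::
    "('a \<Rightarrow> 'a \<Rightarrow> 'a) \<Rightarrow> 'a \<Rightarrow> (int \<times> 'a \<times> 'a \<times> 'a) list \<Rightarrow> 'a \<Rightarrow> int" where
  "diff_combination3 op z es = (\<lambda>x. \<Sum>(c, a, b, d)\<leftarrow>es. c * fsum (diff_product3 op z a b d) x)"

section \<open>Powers of the augmentation ideal of a finite magma\<close>

lemma sum_zero_of_aug_ideal: "x \<in> aug_ideal A \<Longrightarrow> sum x A = 0"
  unfolding aug_ideal_def aug_def by simp

lemma aug_pow_2: "aug_pow A op 2 = add_span {qmult A op x y | x y. x \<in> aug_ideal A \<and> y \<in> aug_ideal A}"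
  by (simp only: numeral_2_eq_2 aug_pow.simps)

lemma aug_pow_3: "aug_pow A op 3 = add_span {qmult A op x y | x y. x \<in> aug_pow A op 2 \<and> y \<in> aug_ideal A}"
  by (simp only: numeral_3_eq_3 numeral_2_eq_2 aug_pow.simps)

lemma aug_pow_sum_list:
  assumes "2 \<le> n" "\<And>c g. (c, g) \<in> set cs \<Longrightarrow> g \<in> aug_pow A op n"
  shows "(\<lambda>a. \<Sum>(c, g)\<leftarrow>cs. c * g a) \<in> aug_pow A op n"
proof -
  define k where "k = n - 2"
  have n: "n = Suc (Suc k)"
    using assms(1) unfolding k_def by simp
  show ?thesis
    using assms(2) unfolding n aug_pow.simps by (rule add_span_sum_list)
qed

locale finite_magma =
  fixes A :: "'a set" and op :: "'a \<Rightarrow> 'a \<Rightarrow> 'a"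
  assumes finite: "finite A"
    and closed: "a \<in> A \<Longrightarrow> b \<in> A \<Longrightarrow> op a b \<in> A"
begin

lemma pairing_qmult:
  "pairing A w (qmult A op x y) = (\<Sum>a\<in>A. \<Sum>b\<in>A. x a * y b * w (op a b))"
proof -
  have "pairing A w (qmult A op x y) = (\<Sum>c\<in>A. \<Sum>a\<in>A. \<Sum>b\<in>A. if op a b = c then x a * y b * w c else 0)"
    unfolding pairing_def qmult_def by (simp add: sum_distrib_left) (intro sum.cong refl; simp add: mult_ac)
  also have "\<dots> = (\<Sum>a\<in>A. \<Sum>b\<in>A. \<Sum>c\<in>A. if op a b = c then x a * y b * w c else 0)"
    by (subst sum.swap) (rule sum.cong[OF refl], rule sum.swap)
  also have "\<dots> = (\<Sum>a\<in>A. \<Sum>b\<in>A. x a * y b * w (op a b))"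
    using finite closed by (simp add: sum.delta)
  finally show ?thesis .
qed

lemma pairing_qmult_qmult:
  "pairing A w (qmult A op (qmult A op u v) y)
       = (\<Sum>a\<in>A. \<Sum>b\<in>A. \<Sum>c\<in>A. u a * v b * y c * w (op (op a b) c))"
proof -
  have "pairing A w (qmult A op (qmult A op u v) y)
      = (\<Sum>d\<in>A. \<Sum>c\<in>A. qmult A op u v d * y c * w (op d c))"
    by (rule pairing_qmult)
  also have "\<dots> = (\<Sum>c\<in>A. y c * pairing A (\<lambda>d. w (op d c)) (qmult A op u v))"
    unfolding pairing_def by (subst sum.swap) (simp add: sum_distrib_left mult_ac)
  also have "\<dots> = (\<Sum>c\<in>A. y c * (\<Sum>a\<in>A. \<Sum>b\<in>A. u a * v b * w (op (op a b) c)))"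
    by (simp only: pairing_qmult)
  also have "\<dots> = (\<Sum>c\<in>A. \<Sum>a\<in>A. \<Sum>b\<in>A. u a * v b * y c * w (op (op a b) c))"
    by (simp add: sum_distrib_left mult_ac)
  also have "\<dots> = (\<Sum>a\<in>A. \<Sum>b\<in>A. \<Sum>c\<in>A. u a * v b * y c * w (op (op a b) c))"
    by (subst sum.swap) (rule sum.cong[OF refl], rule sum.swap)
  finally show ?thesis .
qed

lemma qmult_in_qring: "qmult A op x y \<in> qring A"
  using closed unfolding qring_def qmult_def by (auto intro!: sum.neutral)

lemma aug_pow_2_subset_congruence_subgroup:
  assumes second_difference: "\<And>m w a b. (m, w) \<in> set cs \<Longrightarrow> a \<in> A \<Longrightarrow> b \<in> A \<Longrightarrow>
      m dvd w (op a b) - w (op a z) - w (op z b) + w (op z z)"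
  shows "aug_pow A op 2 \<subseteq> congruence_subgroup A cs"
proof -
  have "qmult A op x y \<in> congruence_subgroup A cs"
    if x: "x \<in> aug_ideal A" and y: "y \<in> aug_ideal A" for x y
  proof -
    have "m dvd pairing A w (qmult A op x y)" if "(m, w) \<in> set cs" for m w
      unfolding pairing_qmult
      by (intro dvd_double_sum_of_sum_zero[OF finite, where z = z] second_difference[OF that])
        (simp_all add: x y sum_zero_of_aug_ideal)
    then show ?thesis
      unfolding congruence_subgroup_def using qmult_in_qring by auto
  qed
  then show ?thesis
    unfolding aug_pow_2 by (intro add_span_minimal add_subgroup_congruence_subgroup) blast
qed

lemma aug_pow_3_subset_congruence_subgroup:
  assumes third_difference: "\<And>m w a b c. (m, w) \<in> set cs \<Longrightarrow> a \<in> A \<Longrightarrow> b \<in> A \<Longrightarrow> c \<in> A \<Longrightarrow>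
      m dvd w (op (op a b) c) - w (op (op a b) z) - w (op (op a z) c) + w (op (op a z) z)
        - w (op (op z b) c) + w (op (op z b) z) + w (op (op z z) c) - w (op (op z z) z)"
  shows "aug_pow A op 3 \<subseteq> congruence_subgroup A cs"
proof -
  let ?C = "congruence_subgroup A cs"
  have triple_products: "qmult A op (qmult A op u v) y \<in> ?C"
    if u: "u \<in> aug_ideal A" and v: "v \<in> aug_ideal A" and y: "y \<in> aug_ideal A" for u v y
  proof -
    have "m dvd pairing A w (qmult A op (qmult A op u v) y)" if "(m, w) \<in> set cs" for m w
      unfolding pairing_qmult_qmult
      by (intro dvd_triple_sum_of_sum_zero[OF finite, where z = z] third_difference[OF that])
        (simp_all add: u v y sum_zero_of_aug_ideal)
    then show ?thesis
      unfolding congruence_subgroup_def using qmult_in_qring by auto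
  qed
  have "qmult A op x y \<in> ?C" if "x \<in> aug_pow A op 2" "y \<in> aug_ideal A" for x y
  proof -
    have "add_subgroup {x. qmult A op x y \<in> ?C}"
      by (intro add_subgroup_qmult_right_preimage add_subgroup_congruence_subgroup)
    then have "aug_pow A op 2 \<subseteq> {x. qmult A op x y \<in> ?C}"
      unfolding aug_pow_2 using triple_products \<open>y \<in> aug_ideal A\<close>
      by (intro add_span_minimal) blast+
    with \<open>x \<in> aug_pow A op 2\<close> show ?thesis by blast
  qed
  then show ?thesis
    unfolding aug_pow_3 by (intro add_span_minimal add_subgroup_congruence_subgroup) blast
qed

lemma qmult_point_masses:
  assumes "p \<in> A" "q \<in> A"
  shows "qmult A op (\<lambda>c. if p = c then k else 0) (\<lambda>c. if q = c then l else 0)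
       = (\<lambda>c. if op p q = c then k * l else 0)"
proof
  fix c
  define X where "X = (if op p q = c then k * l else 0)"
  have "qmult A op (\<lambda>c. if p = c then k else 0) (\<lambda>c. if q = c then l else 0) c
      = (\<Sum>a\<in>A. if a = p then (\<Sum>b\<in>A. if b = q then X else 0) else 0)"
    unfolding qmult_def X_def by (intro sum.cong refl) (auto intro!: sum.cong sum.neutral)
  also have "\<dots> = X"
    using assms finite by (simp add: sum.delta)
  finally show "qmult A op (\<lambda>c. if p = c then k else 0) (\<lambda>c. if q = c then l else 0) c
      = (if op p q = c then k * l else 0)"
    unfolding X_def .
qed

lemma qmult_point_mass_fsum:
  assumes "p \<in> A" "snd ` set M \<subseteq> A"
  shows "qmult A op (\<lambda>c. if p = c then k else 0) (fsum M) = fsum (map (\<lambda>(l, q). (k * l, op p q)) M)"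
  using assms(2)
  by (induction M)
    (auto simp: fsum_Nil fsum_Cons qmult_zero_right qmult_add_right qmult_point_masses assms(1))

lemma qmult_fsum:
  assumes "snd ` set L \<subseteq> A" "snd ` set M \<subseteq> A"
  shows "qmult A op (fsum L) (fsum M) = fsum (fsum_mult op L M)"
  using assms(1)
  by (induction L)
    (auto simp: fsum_Nil fsum_Cons fsum_mult_Nil fsum_mult_Cons fsum_append
      qmult_zero_left qmult_add_left qmult_point_mass_fsum assms(2))

lemma fsum_mult_support:
  "snd ` set L \<subseteq> A \<Longrightarrow> snd ` set M \<subseteq> A \<Longrightarrow> snd ` set (fsum_mult op L M) \<subseteq> A"
  unfolding fsum_mult_def by (force intro!: closed)

lemma fsum_basis_diff_in_aug_ideal:
  assumes "a \<in> A" "z \<in> A"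
  shows "fsum (basis_diff z a) \<in> aug_ideal A"
  using assms finite
  by (auto simp: aug_ideal_def aug_def qring_def basis_diff_def fsum_def sum.distrib sum.delta)

lemma fsum_mult_in_aug_pow:
  assumes "snd ` set L \<subseteq> A" "snd ` set M \<subseteq> A"
    and "fsum L \<in> aug_pow A op (Suc k)" "fsum M \<in> aug_ideal A"
  shows "fsum (fsum_mult op L M) \<in> aug_pow A op (Suc (Suc k))"
  using assms by (auto simp flip: qmult_fsum intro!: add_span.gen)

lemma basis_diff_support: "a \<in> A \<Longrightarrow> z \<in> A \<Longrightarrow> snd ` set (basis_diff z a) \<subseteq> A"
  by (simp add: basis_diff_def)

lemma fsum_diff_product2_in_aug_pow_2:
  assumes "z \<in> A" "a \<in> A" "b \<in> A"
  shows "fsum (diff_product2 op z a b) \<in> aug_pow A op 2"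
proof -
  have "fsum (fsum_mult op (basis_diff z a) (basis_diff z b)) \<in> aug_pow A op (Suc (Suc 0))"
    using assms
    by (intro fsum_mult_in_aug_pow basis_diff_support)
      (simp_all add: fsum_basis_diff_in_aug_ideal del: aug_pow.simps(3))
  then show ?thesis
    by (simp only: diff_product2_def numeral_2_eq_2)
qed

lemma fsum_diff_product3_in_aug_pow_3:
  assumes "z \<in> A" "a \<in> A" "b \<in> A" "c \<in> A"
  shows "fsum (diff_product3 op z a b c) \<in> aug_pow A op 3"
proof -
  have "fsum (fsum_mult op (diff_product2 op z a b) (basis_diff z c)) \<in> aug_pow A op (Suc (Suc (Suc 0)))"
    using assms fsum_diff_product2_in_aug_pow_2[OF assms(1-3)]
    by (intro fsum_mult_in_aug_pow basis_diff_support)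
      (simp_all add: diff_product2_def fsum_mult_support basis_diff_support
        fsum_basis_diff_in_aug_ideal numeral_2_eq_2 del: aug_pow.simps(3))
  then show ?thesis
    by (simp only: diff_product3_def numeral_3_eq_3)
qed

lemma aug_pow_subset_qring: "aug_pow A op (Suc k) \<subseteq> qring A"
proof (cases k)
  case 0
  then show ?thesis by (simp add: aug_ideal_def)
next
  case (Suc n)
  have "{qmult A op x y | x y. x \<in> aug_pow A op (Suc n) \<and> y \<in> aug_ideal A} \<subseteq> qring A"
    using qmult_in_qring by blast
  then show ?thesis
    unfolding Suc aug_pow.simps by (rule add_span_minimal[OF add_subgroup_qring])
qed

lemma diff_combination2_in_aug_pow_2:
  assumes "z \<in> A" and factors: "\<And>c a b. (c, a, b) \<in> set es \<Longrightarrow> a \<in> A \<and> b \<in> A"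
  shows "diff_combination2 op z es \<in> aug_pow A op 2"
proof -
  have "diff_combination2 op z es
      = (\<lambda>x. \<Sum>(c, g)\<leftarrow>map (\<lambda>(c, a, b). (c, fsum (diff_product2 op z a b))) es. c * g x)"
    by (simp add: diff_combination2_def comp_def case_prod_unfold)
  also have "\<dots> \<in> aug_pow A op 2"
    by (rule aug_pow_sum_list)
      (auto dest: factors intro!: fsum_diff_product2_in_aug_pow_2 assms(1))
  finally show ?thesis .
qed

lemma diff_combination3_in_aug_pow_3:
  assumes "z \<in> A" and factors: "\<And>c a b d. (c, a, b, d) \<in> set es \<Longrightarrow> a \<in> A \<and> b \<in> A \<and> d \<in> A"
  shows "diff_combination3 op z es \<in> aug_pow A op 3"
proof -
  have "diff_combination3 op z es
      = (\<lambda>x. \<Sum>(c, g)\<leftarrow>map (\<lambda>(c, a, b, d). (c, fsum (diff_product3 op z a b d))) es. c * g x)"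
    by (simp add: diff_combination3_def comp_def case_prod_unfold)
  also have "\<dots> \<in> aug_pow A op 3"
    by (rule aug_pow_sum_list)
      (auto dest: factors intro!: fsum_diff_product3_in_aug_pow_3 assms(1))
  finally show ?thesis .
qed

end

section \<open>The dihedral quandle of order 8\<close>

abbreviation R8 :: "int set" where
  "R8 \<equiv> dihedral_carrier 8"

abbreviation op8 :: "int \<Rightarrow> int \<Rightarrow> int" where
  "op8 \<equiv> dihedral_op 8"

interpretation R8: finite_magma R8 op8
  by unfold_locales (simp_all add: dihedral_carrier_def dihedral_op_def)

lemma R8_eq_set_upto: "R8 = set [0..7]"
  by (auto simp: dihedral_carrier_def)

lemma R8_cases:
  assumes "x \<in> R8"
  obtains "x = 0" | "x = 1" | "x = 2" | "x = 3" | "x = 4" | "x = 5" | "x = 6" | "x = 7"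
  using assms unfolding dihedral_carrier_def by force

lemma pairing_R8:
  "pairing R8 w f = w 0 * f 0 + w 1 * f 1 + w 2 * f 2 + w 3 * f 3 + w 4 * f 4 + w 5 * f 5 + w 6 * f 6 + w 7 * f 7"
proof -
  have "R8 = {0, 1, 2, 3, 4, 5, 6, 7}"
    by (auto simp: dihedral_carrier_def)
  then show ?thesis
    by (simp add: pairing_def algebra_simps)
qed

definition vec_of_list :: "int list \<Rightarrow> int \<Rightarrow> int" where
  "vec_of_list xs a = (if 0 \<le> a \<and> a < int (length xs) then xs ! nat a else 0)"

definition R8_congruences2 :: "(int \<times> (int \<Rightarrow> int)) list" where
  "R8_congruences2 =
    [(0, vec_of_list [1, 0, 1, 0, 1, 0, 1, 0]),
     (0, vec_of_list [0, 1, 0, 1, 0, 1, 0, 1]),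
     (4, vec_of_list [-1, -1, -2, -2, -3, 1, 0, 0])]"

definition R8_congruences3 :: "(int \<times> (int \<Rightarrow> int)) list" where
  "R8_congruences3 =
    [(0, vec_of_list [1, 0, 1, 0, 1, 0, 1, 0]),
     (0, vec_of_list [0, 1, 0, 1, 0, 1, 0, 1]),
     (2, vec_of_list [-1, -1, -1, 1, 0, 0, 0, 0]),
     (4, vec_of_list [-1, 0, -2, 0, 1, 0, 0, 0]),
     (8, vec_of_list [-1, -3, -4, 0, -1, 1, 0, 0])]"

lemma mem_R8_congruences2_iff:
  "f \<in> congruence_subgroup R8 R8_congruences2 \<longleftrightarrow> f \<in> qring R8
    \<and> f 0 + f 2 + f 4 + f 6 = 0 \<and> f 1 + f 3 + f 5 + f 7 = 0
    \<and> 4 dvd f 5 - f 0 - f 1 - 2 * f 2 - 2 * f 3 - 3 * f 4"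
  by (simp add: congruence_subgroup_def R8_congruences2_def pairing_R8 vec_of_list_def
      algebra_simps)

lemma mem_R8_congruences3_iff:
  "f \<in> congruence_subgroup R8 R8_congruences3 \<longleftrightarrow> f \<in> qring R8
    \<and> f 0 + f 2 + f 4 + f 6 = 0 \<and> f 1 + f 3 + f 5 + f 7 = 0
    \<and> 2 dvd f 3 - f 0 - f 1 - f 2 \<and> 4 dvd f 4 - f 0 - 2 * f 2
    \<and> 8 dvd f 5 - f 0 - 3 * f 1 - 4 * f 2 - f 4"
  by (simp add: congruence_subgroup_def R8_congruences3_def pairing_R8 vec_of_list_def
      algebra_simps)

lemma R8_aug_pow_2_subset: "aug_pow R8 op8 2 \<subseteq> congruence_subgroup R8 R8_congruences2"
proof (rule R8.aug_pow_2_subset_congruence_subgroup[where z = 0])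
  have "\<forall>(m, w)\<in>set R8_congruences2. \<forall>a\<in>R8. \<forall>b\<in>R8.
      m dvd w (op8 a b) - w (op8 a 0) - w (op8 0 b) + w (op8 0 0)"
    unfolding R8_eq_set_upto by code_simp
  then show "m dvd w (op8 a b) - w (op8 a 0) - w (op8 0 b) + w (op8 0 0)"
    if "(m, w) \<in> set R8_congruences2" "a \<in> R8" "b \<in> R8" for m w a b
    using that by fast
qed

lemma R8_aug_pow_3_subset: "aug_pow R8 op8 3 \<subseteq> congruence_subgroup R8 R8_congruences3"
proof (rule R8.aug_pow_3_subset_congruence_subgroup[where z = 0])
  have "\<forall>(m, w)\<in>set R8_congruences3. \<forall>a\<in>R8. \<forall>b\<in>R8. \<forall>c\<in>R8.
      m dvd w (op8 (op8 a b) c) - w (op8 (op8 a b) 0) - w (op8 (op8 a 0) c) + w (op8 (op8 a 0) 0)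
        - w (op8 (op8 0 b) c) + w (op8 (op8 0 b) 0) + w (op8 (op8 0 0) c) - w (op8 (op8 0 0) 0)"
    unfolding R8_eq_set_upto by code_simp
  then show "m dvd w (op8 (op8 a b) c) - w (op8 (op8 a b) 0) - w (op8 (op8 a 0) c) + w (op8 (op8 a 0) 0)
        - w (op8 (op8 0 b) c) + w (op8 (op8 0 b) 0) + w (op8 (op8 0 0) c) - w (op8 (op8 0 0) 0)"
    if "(m, w) \<in> set R8_congruences3" "a \<in> R8" "b \<in> R8" "c \<in> R8" for m w a b c
    using that by fast
qed

text \<open>Each basis vector comes with its expansion in triple products, an entry \<open>(c, a, b, d)\<close>
  standing for \<open>c ((e\<^sub>a - e\<^sub>0)(e\<^sub>b - e\<^sub>0))(e\<^sub>d - e\<^sub>0)\<close>.\<close>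

definition R8_delta3_basis :: "(int list \<times> (int \<times> int \<times> int \<times> int) list) list" where
  "R8_delta3_basis =
    [([1, 0, 0, 1, 1, 2, -2, -3], [(1, 5, 2, 1), (-1, 7, 1, 1)]),
     ([0, 1, 0, 1, 0, 3, 0, -5], [(1, 1, 1, 3), (1, 5, 2, 1), (-1, 7, 1, 1)]),
     ([0, 0, 1, 1, 2, 6, -3, -7], [(1, 1, 1, 3), (1, 3, 2, 2), (-2, 7, 1, 3), (-1, 7, 1, 2)]),
     ([0, 0, 0, 2, 0, 0, 0, -2], [(1, 1, 1, 2), (-1, 7, 1, 2)]),
     ([0, 0, 0, 0, 4, 4, -4, -4], [(-2, 7, 1, 3), (1, 3, 2, 2)]),
     ([0, 0, 0, 0, 0, 8, 0, -8], [(2, 1, 1, 3), (-1, 1, 2, 1), (-2, 7, 1, 3), (1, 5, 2, 1)])]"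

lemma R8_delta3_basis_in_aug_pow_3:
  assumes "(v, es) \<in> set R8_delta3_basis"
  shows "vec_of_list v \<in> aug_pow R8 op8 3"
proof -
  have "\<forall>(v, es)\<in>set R8_delta3_basis. length v = 8
      \<and> (\<forall>(c, a, b, d)\<in>set es. a \<in> R8 \<and> b \<in> R8 \<and> d \<in> R8)
      \<and> (\<forall>x\<in>R8. vec_of_list v x = diff_combination3 op8 0 es x)"
    unfolding R8_eq_set_upto by code_simp
  then have len: "length v = 8"
    and factors: "\<And>c a b d. (c, a, b, d) \<in> set es \<Longrightarrow> a \<in> R8 \<and> b \<in> R8 \<and> d \<in> R8"
    and pointwise: "\<And>x. x \<in> R8 \<Longrightarrow> vec_of_list v x = diff_combination3 op8 0 es x"
    using assms by fastforce+
  have combination: "diff_combination3 op8 0 es \<in> aug_pow R8 op8 3"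
    by (rule R8.diff_combination3_in_aug_pow_3[OF _ factors]) (simp add: dihedral_carrier_def)
  have "vec_of_list v = diff_combination3 op8 0 es"
  proof (rule qring_eqI[OF _ _ pointwise])
    show "vec_of_list v \<in> qring R8"
      using len by (simp add: qring_def vec_of_list_def dihedral_carrier_def)
    show "diff_combination3 op8 0 es \<in> qring R8"
      using combination R8.aug_pow_subset_qring[of 2] by (auto simp: numeral_3_eq_3)
  qed
  with combination show ?thesis by simp
qed

lemma R8_congruences3_subset: "congruence_subgroup R8 R8_congruences3 \<subseteq> aug_pow R8 op8 3"
proof
  fix f assume "f \<in> congruence_subgroup R8 R8_congruences3"
  then have f: "f \<in> qring R8"
    and even: "f 0 + f 2 + f 4 + f 6 = 0" and odd: "f 1 + f 3 + f 5 + f 7 = 0"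
    and "2 dvd f 3 - f 0 - f 1 - f 2" "4 dvd f 4 - f 0 - 2 * f 2"
      "8 dvd f 5 - f 0 - 3 * f 1 - 4 * f 2 - f 4"
    by (simp_all add: mem_R8_congruences3_iff)
  then obtain p q r where p: "f 3 - f 0 - f 1 - f 2 = 2 * p" and q: "f 4 - f 0 - 2 * f 2 = 4 * q"
    and r: "f 5 - f 0 - 3 * f 1 - 4 * f 2 - f 4 = 8 * r"
    by (meson dvdE)
  define g where "g = (\<lambda>x. \<Sum>(c, h)\<leftarrow>zip [f 0, f 1, f 2, p, q, r]
      (map (\<lambda>(v, es). vec_of_list v) R8_delta3_basis). c * h x)"
  have g: "g \<in> aug_pow R8 op8 3"
    unfolding g_def
    by (rule aug_pow_sum_list) (auto dest!: set_zip_rightD intro: R8_delta3_basis_in_aug_pow_3)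
  have "f = g"
  proof (rule qring_eqI[OF f])
    show "g \<in> qring R8"
      using g R8.aug_pow_subset_qring[of 2] by (auto simp: numeral_3_eq_3)
    show "f x = g x" if "x \<in> R8" for x
      using that even odd p q r
      by (cases rule: R8_cases) (simp_all add: g_def R8_delta3_basis_def vec_of_list_def)
  qed
  with g show "f \<in> aug_pow R8 op8 3" by simp
qed

lemma R8_aug_pow_3_eq: "aug_pow R8 op8 3 = congruence_subgroup R8 R8_congruences3"
  using R8_aug_pow_3_subset R8_congruences3_subset by (rule equalityI)

definition R8_delta2_representatives :: "(int \<times> int \<times> int) list list" where
  "R8_delta2_representatives =
    [[], [(1, 2, 2)], [(1, 3, 1)], [(1, 7, 1)], [(1, 1, 2)], [(1, 3, 2)], [(1, 7, 3)], [(1, 3, 3)],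
     [(1, 2, 1)], [(1, 2, 3)], [(1, 1, 1)], [(1, 5, 1)], [(1, 1, 1), (1, 3, 1)],
     [(1, 1, 1), (1, 7, 1)], [(1, 1, 3)], [(1, 5, 3)]]"

definition R8_residue_table :: "int list list" where
  "R8_residue_table =
    [[0, 0, 0, 0, 0], [0, 0, 0, 0, 4], [0, 0, 0, 1, 2], [0, 0, 0, 1, 6],
     [0, 0, 0, 2, 0], [0, 0, 0, 2, 4], [0, 0, 0, 3, 2], [0, 0, 0, 3, 6],
     [0, 0, 1, 0, 2], [0, 0, 1, 0, 6], [0, 0, 1, 1, 0], [0, 0, 1, 1, 4],
     [0, 0, 1, 2, 2], [0, 0, 1, 2, 6], [0, 0, 1, 3, 0], [0, 0, 1, 3, 4]]"

lemma R8_representative_residues: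
  "map (\<lambda>es. residues R8 R8_congruences3 (diff_combination2 op8 0 es)) R8_delta2_representatives
    = R8_residue_table"
  unfolding R8_eq_set_upto by code_simp

lemma R8_residues_in_table:
  assumes "f \<in> congruence_subgroup R8 R8_congruences2"
  shows "residues R8 R8_congruences3 f \<in> set R8_residue_table"
proof -
  from assms have even: "f 0 + f 2 + f 4 + f 6 = 0" and odd: "f 1 + f 3 + f 5 + f 7 = 0"
    and div4: "4 dvd f 5 - f 0 - f 1 - 2 * f 2 - 2 * f 3 - 3 * f 4"
    by (simp_all add: mem_R8_congruences2_iff)
  define u v w where "u = f 3 - f 0 - f 1 - f 2" and "v = f 4 - f 0 - 2 * f 2"
    and "w = f 5 - f 0 - 3 * f 1 - 4 * f 2 - f 4"
  have residues: "residues R8 R8_congruences3 f = [0, 0, u mod 2, v mod 4, w mod 8]"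
    using even odd
    by (simp add: residues_def R8_congruences3_def pairing_R8 vec_of_list_def u_def v_def w_def
        algebra_simps)
  have "w - 2 * u - 2 * v = (f 5 - f 0 - f 1 - 2 * f 2 - 2 * f 3 - 3 * f 4) + 4 * (f 0 + f 2)"
    by (simp add: u_def v_def w_def algebra_simps)
  then have "4 dvd w - 2 * u - 2 * v"
    by (simp only:) (intro dvd_add div4 dvd_triv_left)
  then have "4 dvd w mod 8 - 2 * (u mod 2) - 2 * (v mod 4)"
    by presburger
  moreover have "\<forall>a\<in>set [0..1]. \<forall>b\<in>set [0..3]. \<forall>c\<in>set [0..7].
      4 dvd c - 2 * a - 2 * b \<longrightarrow> [0, 0, a, b, c] \<in> set R8_residue_table"
    by code_simp
  ultimately show ?thesis
    unfolding residues by simp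
qed

lemma R8_residues_image: "residues R8 R8_congruences3 ` aug_pow R8 op8 2 = set R8_residue_table"
proof
  show "residues R8 R8_congruences3 ` aug_pow R8 op8 2 \<subseteq> set R8_residue_table"
    using R8_aug_pow_2_subset R8_residues_in_table by blast
  have "\<forall>es\<in>set R8_delta2_representatives. \<forall>(c, a, b)\<in>set es. a \<in> R8 \<and> b \<in> R8"
    unfolding R8_eq_set_upto by code_simp
  then have "diff_combination2 op8 0 es \<in> aug_pow R8 op8 2" if "es \<in> set R8_delta2_representatives" for es
    using that by (intro R8.diff_combination2_in_aug_pow_2) (auto simp: dihedral_carrier_def)
  then show "set R8_residue_table \<subseteq> residues R8 R8_congruences3 ` aug_pow R8 op8 2"
    unfolding R8_representative_residues[symmetric] by auto
qed

theorem theorem2p1: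
  shows "card (quot_cosets (aug_pow (dihedral_carrier 8) (dihedral_op 8) 2)
                           (aug_pow (dihedral_carrier 8) (dihedral_op 8) 3)) = 16"
proof -
  have "aug_pow R8 op8 2 \<subseteq> qring R8"
    using R8.aug_pow_subset_qring[of 1] by (simp add: numeral_2_eq_2)
  then have "card (quot_cosets (aug_pow R8 op8 2) (aug_pow R8 op8 3))
      = card (residues R8 R8_congruences3 ` aug_pow R8 op8 2)"
    unfolding R8_aug_pow_3_eq by (rule card_quot_cosets_congruence_subgroup)
  also have "\<dots> = 16"
    unfolding R8_residues_image by (simp add: R8_residue_table_def)
  finally show ?thesis .
qed

end
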